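(* Let $f:\mathbb{R}^m\to\mathbb{R}$ be convex and $L$-smooth, and let $\nabla f_\xi(\cdot)$ satisfy $\mathbb{E}_\xi[\nabla f_\xi(x)]=\nabla f(x)$ and $\mathbb{E}_\xi\|\nabla f_\xi(x)-\nabla f(x)\|^2\le\rho^2$ for all $x$. Let $t\ge1$, $x_0\in\mathbb{R}^m$ fixed, and $x_{s+1}=x_s-\gamma\nabla f_{\xi_s}(x_s)$ for $s=0,\dots,t-1$, with each $\xi_s$ drawn independently of $\xi_0,\dots,\xi_{s-1}$, where $0<\gamma\le\frac1L\min\{1,\frac1{t-1}\}$ (with $\frac{1}{t-1}=+\infty$ when $t=1$). Then $$\mathbb{E}\big[\|x_0-x_t\|^2\big]\le\gamma^2t^2\|\nabla f(x_0)\|^2+\gamma^2t\big(1+2(t-1)(t+1)\gamma L\big)\rho^2.$$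
   Context: $f$ is $L$-smooth means $\nabla f$ is $L$-Lipschitz. *)

theory Defs
  imports "HOL-Analysis.Analysis" "HOL-Probability.Probability"
begin

fun sgd_iter :: "('a::real_vector \<Rightarrow> 'b \<Rightarrow> 'a) \<Rightarrow> real \<Rightarrow> 'a \<Rightarrow> (nat \<Rightarrow> 'b) \<Rightarrow> nat \<Rightarrow> 'a" where
  "sgd_iter G \<gamma> x0 w 0 = x0"
| "sgd_iter G \<gamma> x0 w (Suc s) = sgd_iter G \<gamma> x0 w s - \<gamma> *\<^sub>R G (sgd_iter G \<gamma> x0 w s) (w s)"

end

(* Potential-function argument.  With m steps remaining, let
     Phi_m(x) = |x0 - x + gamma m g(x0)|^2 + gamma^2 m (m + 1) / 2 |g(x)|^2 .
   Cocoercivity of the gradient of a convex L-smooth function,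
   |g y - g x|^2 <= L <g y - g x, y - x>, and the unbiasedness and variance bound of the
   stochastic gradient give, for one step of SGD from x_s,
     E Phi_(m-1)(x_(s+1)) + gamma^2 m |g(x0)|^2 <= Phi_m(x_s) + gamma^2 rho^2 (1 + gamma L (m - 1) m / 2).
   Telescoping from Phi_t(x0) = gamma^2 t^2 |g(x0)|^2 + gamma^2 t (t + 1) / 2 |g(x0)|^2 down to
   Phi_0(x_t) = |x0 - x_t|^2 cancels the second summand against the accumulated drift terms, and
   summing the noise terms yields the bound with (t - 1)(t + 1) / 6 in place of 2 (t - 1)(t + 1). *)

theory Submission
  imports Defs
begin

section \<open>Convex functions with Lipschitz gradient\<close>

lemma has_field_derivative_along_line:
  fixes F :: "'a::real_inner \<Rightarrow> real"
  assumes "\<And>x. (F has_derivative (\<lambda>h. D x \<bullet> h)) (at x)"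
  shows "((\<lambda>\<tau>. F (x + \<tau> *\<^sub>R v)) has_real_derivative (D (x + \<tau> *\<^sub>R v) \<bullet> v)) (at \<tau>)"
proof -
  have "((\<lambda>\<tau>. x + \<tau> *\<^sub>R v) has_derivative (\<lambda>h. h *\<^sub>R v)) (at \<tau>)"
    by (auto intro!: derivative_eq_intros)
  from has_derivative_compose[OF this assms]
  have "((\<lambda>\<tau>. F (x + \<tau> *\<^sub>R v)) has_derivative (\<lambda>h. D (x + \<tau> *\<^sub>R v) \<bullet> (h *\<^sub>R v))) (at \<tau>)"
    by (simp add: o_def)
  moreover have "(\<lambda>h. D (x + \<tau> *\<^sub>R v) \<bullet> (h *\<^sub>R v)) = (*) (D (x + \<tau> *\<^sub>R v) \<bullet> v)"
    by (auto simp: fun_eq_iff)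
  ultimately show ?thesis
    by (simp add: has_field_derivative_def)
qed

lemma lipschitz_gradient_quadratic_upper_bound:
  fixes F :: "'a::real_inner \<Rightarrow> real"
  assumes der: "\<And>x. (F has_derivative (\<lambda>h. D x \<bullet> h)) (at x)"
    and lip: "\<And>x y. norm (D x - D y) \<le> L * norm (x - y)"
  shows "F y \<le> F x + D x \<bullet> (y - x) + L / 2 * (norm (y - x))\<^sup>2"
proof -
  define v where "v = y - x"
  define \<psi> where "\<psi> \<tau> = F (x + \<tau> *\<^sub>R v) - \<tau> * (D x \<bullet> v) - L / 2 * \<tau>\<^sup>2 * (norm v)\<^sup>2" for \<tau>
  have "\<psi> 1 \<le> \<psi> 0"
  proof (rule DERIV_nonpos_imp_nonincreasing[of 0 1])
    fix \<tau> :: real assume \<tau>: "0 \<le> \<tau>" "\<tau> \<le> 1"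
    have "(\<psi> has_real_derivative (D (x + \<tau> *\<^sub>R v) \<bullet> v - D x \<bullet> v - L * \<tau> * (norm v)\<^sup>2)) (at \<tau>)"
      unfolding \<psi>_def
      by (auto intro!: derivative_eq_intros has_field_derivative_along_line[OF der])
    moreover have "D (x + \<tau> *\<^sub>R v) \<bullet> v - D x \<bullet> v \<le> L * \<tau> * (norm v)\<^sup>2"
    proof -
      have "D (x + \<tau> *\<^sub>R v) \<bullet> v - D x \<bullet> v \<le> norm (D (x + \<tau> *\<^sub>R v) - D x) * norm v"
        by (metis inner_diff_left norm_cauchy_schwarz)
      also have "\<dots> \<le> L * norm (\<tau> *\<^sub>R v) * norm v"
        using lip[of "x + \<tau> *\<^sub>R v" x] by (simp add: mult_right_mono)
      finally show ?thesis
        using \<tau> by (simp add: power2_eq_square mult.assoc)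
    qed
    ultimately show "\<exists>y. (\<psi> has_real_derivative y) (at \<tau>) \<and> y \<le> 0"
      by (intro exI[of _ "D (x + \<tau> *\<^sub>R v) \<bullet> v - D x \<bullet> v - L * \<tau> * (norm v)\<^sup>2"]) simp
  qed simp
  then show ?thesis
    unfolding \<psi>_def v_def by simp
qed

lemma convex_on_gradient_lower_bound:
  fixes f :: "'a::real_inner \<Rightarrow> real"
  assumes convex: "convex_on UNIV f"
    and grad: "\<And>x. (f has_derivative (\<lambda>h. g x \<bullet> h)) (at x)"
  shows "f x + g x \<bullet> (y - x) \<le> f y"
proof -
  define h where "h \<tau> = f (x + \<tau> *\<^sub>R (y - x))" for \<tau> :: real
  have "convex_on UNIV h"
  proof (rule convex_onI)
    fix u a b :: real assume u: "0 < u" "u < 1"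
    have "x + ((1 - u) * a + u * b) *\<^sub>R (y - x)
        = (1 - u) *\<^sub>R (x + a *\<^sub>R (y - x)) + u *\<^sub>R (x + b *\<^sub>R (y - x))"
      by (simp add: algebra_simps)
    then show "h ((1 - u) *\<^sub>R a + u *\<^sub>R b) \<le> (1 - u) * h a + u * h b"
      unfolding h_def using convex_onD[OF convex, of u] u by simp
  qed auto
  moreover have "(h has_real_derivative (g x \<bullet> (y - x))) (at 0)"
    unfolding h_def using has_field_derivative_along_line[OF grad, of x "y - x" 0] by simp
  ultimately have "h 1 - h 0 \<ge> g x \<bullet> (y - x) * (1 - 0)"
    by (intro convex_on_imp_above_tangent) auto
  then show ?thesis
    unfolding h_def by simp
qed

lemma convex_lipschitz_gradient_cocoercive:
  fixes f :: "'a::real_inner \<Rightarrow> real"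
  assumes convex: "convex_on UNIV f"
    and grad: "\<And>x. (f has_derivative (\<lambda>h. g x \<bullet> h)) (at x)"
    and smooth: "lipschitz_on L UNIV g"
  shows "(norm (g y - g x))\<^sup>2 \<le> L * ((g y - g x) \<bullet> (y - x))"
proof -
  have L0: "L \<ge> 0" and lip: "\<And>x y. norm (g x - g y) \<le> L * norm (x - y)"
    using smooth by (auto simp: lipschitz_on_def dist_norm)
  show ?thesis
  proof (cases "L = 0")
    case True
    then show ?thesis using lip[of y x] by simp
  next
    case False
    with L0 have L: "L > 0" by simp
    text \<open>The convex function \<open>\<phi> = f - g a \<bullet> _\<close> is minimal at a; comparing \<open>\<phi> a\<close> with \<phi>
      at a gradient step from b quantifies how far b is from minimal.\<close>
    have key: "f a + g a \<bullet> (b - a) + (norm (g b - g a))\<^sup>2 / (2 * L) \<le> f b" for a b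
    proof -
      define \<phi> where "\<phi> z = f z - g a \<bullet> z" for z
      have "\<And>z. (\<phi> has_derivative (\<lambda>h. (g z - g a) \<bullet> h)) (at z)"
        unfolding \<phi>_def using grad by (auto intro!: derivative_eq_intros simp: inner_diff_left)
      note upper = lipschitz_gradient_quadratic_upper_bound[OF this, of L]
      define y where "y = b - (1 / L) *\<^sub>R (g b - g a)"
      have "\<phi> a \<le> \<phi> y"
        using convex_on_gradient_lower_bound[OF convex grad, of a y]
        unfolding \<phi>_def by (simp add: inner_diff_right)
      also have "\<dots> \<le> \<phi> b + (g b - g a) \<bullet> (y - b) + L / 2 * (norm (y - b))\<^sup>2"
        by (rule upper) (use lip in simp)
      also have "\<dots> = \<phi> b - (norm (g b - g a))\<^sup>2 / (2 * L)"
      proof -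
        have "y - b = - ((1 / L) *\<^sub>R (g b - g a))"
          by (simp add: y_def)
        then have "(g b - g a) \<bullet> (y - b) = - (norm (g b - g a))\<^sup>2 / L"
          and "(norm (y - b))\<^sup>2 = (norm (g b - g a))\<^sup>2 / L\<^sup>2"
          using L by (simp_all add: power2_norm_eq_inner power_divide)
        then show ?thesis
          using L by (simp add: power2_eq_square field_simps)
      qed
      finally show ?thesis
        unfolding \<phi>_def by (simp add: inner_diff_right)
    qed
    have "(norm (g y - g x))\<^sup>2 / L \<le> (g y - g x) \<bullet> (y - x)"
      using key[of x y] key[of y x]
      by (simp add: norm_minus_commute inner_diff_left inner_diff_right inner_commute field_simps)
    then show ?thesis
      using L by (simp add: field_simps)
  qed
qed

section \<open>Cocoercive gradients\<close>

lemma power2_norm_add: "(norm (x + y))\<^sup>2 = (norm x)\<^sup>2 + 2 * (x \<bullet> y) + (norm y)\<^sup>2"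
  for x y :: "'a::real_inner"
  by (simp add: power2_norm_eq_inner inner_add_left inner_add_right inner_commute)

locale cocoercive_gradient =
  fixes g :: "'a::real_inner \<Rightarrow> 'a" and L :: real
  assumes cocoercive: "\<And>x y. (norm (g y - g x))\<^sup>2 \<le> L * ((g y - g x) \<bullet> (y - x))"
    and L_nonneg: "0 \<le> L"
begin

lemma gradient_monotone: "0 \<le> (g y - g x) \<bullet> (y - x)"
proof (cases "L = 0")
  case True
  then show ?thesis
    using cocoercive[where x = x and y = y] by simp
next
  case False
  with L_nonneg have "0 < L"
    by simp
  moreover have "0 \<le> L * ((g y - g x) \<bullet> (y - x))"
    using cocoercive[where x = x and y = y] by (smt (verit) zero_le_power2)
  ultimately show ?thesis
    by (simp add: zero_le_mult_iff)
qed

lemma gradient_lipschitz: "norm (g y - g x) \<le> L * norm (y - x)"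
proof (cases "g y = g x")
  case False
  have "(norm (g y - g x))\<^sup>2 \<le> L * (norm (g y - g x) * norm (y - x))"
    using cocoercive[where x = x and y = y] norm_cauchy_schwarz[of "g y - g x" "y - x"] L_nonneg
    by (meson mult_left_mono order_trans)
  with False show ?thesis
    by (simp add: power2_eq_square)
qed (use L_nonneg in simp)

lemma continuous_on_gradient: "continuous_on UNIV g"
  using gradient_lipschitz L_nonneg
  by (intro lipschitz_on_continuous_on[of L]) (auto simp: lipschitz_on_def dist_norm)

text \<open>With \<open>\<Delta> = g y - g x\<close> for the step \<open>y = x - \<gamma> (g x + e)\<close> and \<open>c = \<gamma> L\<close>, cocoercivity makes
  \<open>c (2 \<Delta>\<bullet>g x + \<parallel>\<Delta>\<parallel>\<^sup>2 - c \<parallel>e\<parallel>\<^sup>2) + \<parallel>\<Delta> + c e\<parallel>\<^sup>2 + (1 - c) \<parallel>\<Delta>\<parallel>\<^sup>2\<close> nonpositive.\<close>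
lemma norm_gradient_after_step:
  assumes "0 < \<gamma>" "\<gamma> * L \<le> 1"
  shows "(norm (g (x - \<gamma> *\<^sub>R (g x + e))))\<^sup>2 \<le> (norm (g x))\<^sup>2 + \<gamma> * L * (norm e)\<^sup>2"
proof -
  define \<Delta> where "\<Delta> = g (x - \<gamma> *\<^sub>R (g x + e)) - g x"
  define c where "c = \<gamma> * L"
  have c: "0 \<le> c" "c \<le> 1"
    using assms L_nonneg by (auto simp: c_def)
  have "(norm \<Delta>)\<^sup>2 \<le> L * (\<Delta> \<bullet> ((x - \<gamma> *\<^sub>R (g x + e)) - x))"
    unfolding \<Delta>_def by (rule cocoercive)
  then have coco: "(norm \<Delta>)\<^sup>2 + c * (\<Delta> \<bullet> (g x + e)) \<le> 0"
    by (simp add: c_def algebra_simps)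
  have "(norm (\<Delta> + c *\<^sub>R e))\<^sup>2 = (norm \<Delta>)\<^sup>2 + 2 * c * (\<Delta> \<bullet> e) + c\<^sup>2 * (norm e)\<^sup>2"
    using power2_norm_add[of \<Delta> "c *\<^sub>R e"] by (simp add: power_mult_distrib)
  then have identity: "c * (2 * (\<Delta> \<bullet> g x) + (norm \<Delta>)\<^sup>2 - c * (norm e)\<^sup>2)
      + (norm (\<Delta> + c *\<^sub>R e))\<^sup>2 + (1 - c) * (norm \<Delta>)\<^sup>2
      = 2 * ((norm \<Delta>)\<^sup>2 + c * (\<Delta> \<bullet> (g x + e)))"
    by (simp add: power2_eq_square algebra_simps)
  have "2 * (\<Delta> \<bullet> g x) + (norm \<Delta>)\<^sup>2 \<le> c * (norm e)\<^sup>2"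
  proof (cases "c = 0")
    case True
    then show ?thesis
      using coco by simp
  next
    case False
    have "c * (2 * (\<Delta> \<bullet> g x) + (norm \<Delta>)\<^sup>2 - c * (norm e)\<^sup>2) \<le> 0"
      using identity coco c by (smt (verit) mult_nonneg_nonneg zero_le_power2)
    with False c show ?thesis
      by (simp add: mult_le_0_iff)
  qed
  moreover have "(norm (g x + \<Delta>))\<^sup>2 = (norm (g x))\<^sup>2 + 2 * (\<Delta> \<bullet> g x) + (norm \<Delta>)\<^sup>2"
    by (simp add: power2_norm_add inner_commute)
  ultimately show ?thesis
    by (simp add: \<Delta>_def c_def)
qed

text \<open>Monotonicity of g is what lets the anchor term \<open>\<gamma> k g x\<^sub>0\<close> absorb the gradient \<open>\<gamma> g x\<close>.\<close>
lemma anchored_gradient_shift: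
  assumes "0 \<le> \<gamma>" "1 \<le> k"
  shows "(norm (x0 - x + (\<gamma> * (k - 1)) *\<^sub>R g x0 + \<gamma> *\<^sub>R g x))\<^sup>2 + \<gamma>\<^sup>2 * k * (norm (g x0))\<^sup>2
    \<le> (norm (x0 - x + (\<gamma> * k) *\<^sub>R g x0))\<^sup>2 + \<gamma>\<^sup>2 * k * (norm (g x))\<^sup>2"
proof -
  define d where "d = g x - g x0"
  define u where "u = x0 - x + (\<gamma> * k) *\<^sub>R g x0"
  have shift: "x0 - x + (\<gamma> * (k - 1)) *\<^sub>R g x0 + \<gamma> *\<^sub>R g x = u + \<gamma> *\<^sub>R d"
    by (simp add: u_def d_def algebra_simps)
  have "(norm (u + \<gamma> *\<^sub>R d))\<^sup>2 = (norm u)\<^sup>2 + 2 * \<gamma> * (u \<bullet> d) + \<gamma>\<^sup>2 * (norm d)\<^sup>2"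
    using power2_norm_add[of u "\<gamma> *\<^sub>R d"] by (simp add: power_mult_distrib)
  moreover have "u \<bullet> d = (x0 - x) \<bullet> d + \<gamma> * k * (g x0 \<bullet> d)"
    by (simp add: u_def inner_add_left)
  moreover have "(norm (g x))\<^sup>2 = (norm (g x0))\<^sup>2 + 2 * (g x0 \<bullet> d) + (norm d)\<^sup>2"
    using power2_norm_add[of "g x0" d] by (simp add: d_def)
  moreover have "\<gamma> * ((x0 - x) \<bullet> d) \<le> 0"
  proof -
    have "(x0 - x) \<bullet> d = - ((g x0 - g x) \<bullet> (x0 - x))"
      by (simp add: d_def inner_commute inner_diff_right)
    then show ?thesis
      using gradient_monotone[where x = x and y = x0] assms(1) by (simp add: mult_nonneg_nonpos)
  qed
  moreover have "\<gamma>\<^sup>2 * (norm d)\<^sup>2 \<le> \<gamma>\<^sup>2 * k * (norm d)\<^sup>2"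
    using mult_right_mono[OF mult_left_mono[OF assms(2), of "\<gamma>\<^sup>2"], of "(norm d)\<^sup>2"] by simp
  ultimately have "(norm (u + \<gamma> *\<^sub>R d))\<^sup>2 + \<gamma>\<^sup>2 * k * (norm (g x0))\<^sup>2
      \<le> (norm u)\<^sup>2 + \<gamma>\<^sup>2 * k * (norm (g x))\<^sup>2"
    by (simp add: power2_eq_square algebra_simps)
  then show ?thesis
    by (simp only: shift u_def)
qed

end

section \<open>Iterates of stochastic gradient descent\<close>

lemma (in prob_space) expectation_power2_norm_add_centered:
  fixes e :: "'a \<Rightarrow> 'b::euclidean_space"
  assumes "integrable M e" "(\<integral>z. e z \<partial>M) = 0" "integrable M (\<lambda>z. (norm (e z))\<^sup>2)"
  shows "(\<integral>z. (norm (a + e z))\<^sup>2 \<partial>M) = (norm a)\<^sup>2 + (\<integral>z. (norm (e z))\<^sup>2 \<partial>M)"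
proof -
  have "(\<integral>z. (norm (a + e z))\<^sup>2 \<partial>M) = (\<integral>z. (norm a)\<^sup>2 + 2 * (a \<bullet> e z) + (norm (e z))\<^sup>2 \<partial>M)"
    by (simp add: power2_norm_add)
  also have "\<dots> = (norm a)\<^sup>2 + 2 * (a \<bullet> (\<integral>z. e z \<partial>M)) + (\<integral>z. (norm (e z))\<^sup>2 \<partial>M)"
    using assms(1,3) by (simp add: prob_space)
  finally show ?thesis
    using assms(2) by simp
qed

lemma sgd_iter_cong:
  "(\<And>j. j < s \<Longrightarrow> w j = w' j) \<Longrightarrow> sgd_iter G \<gamma> x0 w s = sgd_iter G \<gamma> x0 w' s"
  by (induction s) auto

lemma measurable_sgd_iter:
  fixes G :: "'a::{real_normed_vector, second_countable_topology} \<Rightarrow> 'b \<Rightarrow> 'a"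
  assumes G: "(\<lambda>(x, z). G x z) \<in> borel_measurable (borel \<Otimes>\<^sub>M M)" and "s \<le> k"
  shows "(\<lambda>w. sgd_iter G \<gamma> x0 w s) \<in> borel_measurable (PiM {..<k} (\<lambda>_. M))"
  using \<open>s \<le> k\<close>
proof (induction s)
  case (Suc s)
  then have "(\<lambda>w. (sgd_iter G \<gamma> x0 w s, w s)) \<in> measurable (PiM {..<k} (\<lambda>_. M)) (borel \<Otimes>\<^sub>M M)"
    by (intro measurable_Pair measurable_component_singleton) auto
  from measurable_compose[OF this G] Suc show ?case
    by simp
qed simp

lemma nn_integral_sgd_iter_Suc:
  fixes G :: "'a::{real_normed_vector, second_countable_topology} \<Rightarrow> 'b \<Rightarrow> 'a"
  assumes "sigma_finite_measure M"
    and G: "(\<lambda>(x, z). G x z) \<in> borel_measurable (borel \<Otimes>\<^sub>M M)"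
    and F: "F \<in> borel_measurable borel"
  shows "(\<integral>\<^sup>+ w. F (sgd_iter G \<gamma> x0 w (Suc s)) \<partial>PiM {..<Suc s} (\<lambda>_. M))
    = (\<integral>\<^sup>+ w. (\<integral>\<^sup>+ z. F (sgd_iter G \<gamma> x0 w s - \<gamma> *\<^sub>R G (sgd_iter G \<gamma> x0 w s) z) \<partial>M)
         \<partial>PiM {..<s} (\<lambda>_. M))"
proof -
  interpret product_sigma_finite "\<lambda>_. M"
    using assms(1) by (simp add: product_sigma_finite_def)
  have "(\<lambda>w. F (sgd_iter G \<gamma> x0 w (Suc s))) \<in> borel_measurable (PiM (insert s {..<s}) (\<lambda>_. M))"
    using measurable_sgd_iter[OF G, of "Suc s" "Suc s"] F by (simp add: lessThan_Suc)
  then have "(\<integral>\<^sup>+ w. F (sgd_iter G \<gamma> x0 w (Suc s)) \<partial>PiM {..<Suc s} (\<lambda>_. M))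
      = (\<integral>\<^sup>+ w. (\<integral>\<^sup>+ z. F (sgd_iter G \<gamma> x0 (w(s := z)) (Suc s)) \<partial>M) \<partial>PiM {..<s} (\<lambda>_. M))"
    unfolding lessThan_Suc using product_nn_integral_insert[of "{..<s}" s] by simp
  also have "\<dots> = (\<integral>\<^sup>+ w. (\<integral>\<^sup>+ z. F (sgd_iter G \<gamma> x0 w s - \<gamma> *\<^sub>R G (sgd_iter G \<gamma> x0 w s) z) \<partial>M)
         \<partial>PiM {..<s} (\<lambda>_. M))"
  proof -
    have "sgd_iter G \<gamma> x0 (w(s := z)) s = sgd_iter G \<gamma> x0 w s" for w z
      by (rule sgd_iter_cong) simp
    then show ?thesis
      by simp
  qed
  finally show ?thesis .
qed

lemma telescoping_sum_le:
  fixes a d e :: "nat \<Rightarrow> 'a::ordered_comm_monoid_add"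
  assumes "\<And>s. s < n \<Longrightarrow> a (Suc s) + d s \<le> a s + e s"
  shows "a n + (\<Sum>s<n. d s) \<le> a 0 + (\<Sum>s<n. e s)"
  using assms
proof (induction n)
  case (Suc n)
  have "a (Suc n) + (\<Sum>s<Suc n. d s) = (a (Suc n) + d n) + (\<Sum>s<n. d s)"
    by (simp add: ac_simps)
  also have "\<dots> \<le> (a n + e n) + (\<Sum>s<n. d s)"
    using Suc.prems by (intro add_right_mono) simp
  also have "\<dots> = (a n + (\<Sum>s<n. d s)) + e n"
    by (simp add: ac_simps)
  also have "\<dots> \<le> (a 0 + (\<Sum>s<n. e s)) + e n"
    using Suc by (intro add_right_mono) simp
  finally show ?case
    by (simp add: ac_simps)
qed simp

section \<open>The potential argument\<close>

locale sgd_cocoercive = cocoercive_gradient g L + prob_space M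
  for g :: "'a::euclidean_space \<Rightarrow> 'a" and L :: real and M :: "'b measure" +
  fixes G :: "'a \<Rightarrow> 'b \<Rightarrow> 'a" and \<rho> \<gamma> :: real
  assumes step_pos: "0 < \<gamma>" and step_le: "\<gamma> * L \<le> 1"
    and G_measurable: "(\<lambda>(x, z). G x z) \<in> borel_measurable (borel \<Otimes>\<^sub>M M)"
    and unbiased: "\<And>x. integrable M (G x) \<and> (\<integral>z. G x z \<partial>M) = g x"
    and variance: "\<And>x. (\<integral>\<^sup>+ z. ennreal ((norm (G x z - g x))\<^sup>2) \<partial>M) \<le> ennreal (\<rho>\<^sup>2)"
begin

lemma gradient_borel_measurable [measurable]: "g \<in> borel_measurable borel"
  by (rule borel_measurable_continuous_onI[OF continuous_on_gradient])

lemma noise_second_moment: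
  "integrable M (\<lambda>z. (norm (G x z - g x))\<^sup>2)" "(\<integral>z. (norm (G x z - g x))\<^sup>2 \<partial>M) \<le> \<rho>\<^sup>2"
proof -
  have "G x \<in> borel_measurable M"
    using measurable_compose[OF measurable_Pair1'[of x borel M] G_measurable] by simp
  moreover have "(\<integral>\<^sup>+ z. ennreal ((norm (G x z - g x))\<^sup>2) \<partial>M) < \<infinity>"
    using variance[of x] by (simp add: le_less_trans)
  ultimately show integrable: "integrable M (\<lambda>z. (norm (G x z - g x))\<^sup>2)"
    by (intro integrableI_nonneg) auto
  have "ennreal (\<integral>z. (norm (G x z - g x))\<^sup>2 \<partial>M) = (\<integral>\<^sup>+ z. ennreal ((norm (G x z - g x))\<^sup>2) \<partial>M)"
    using integrable by (intro nn_integral_eq_integral[symmetric]) auto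
  with variance[of x] have "ennreal (\<integral>z. (norm (G x z - g x))\<^sup>2 \<partial>M) \<le> ennreal (\<rho>\<^sup>2)"
    by simp
  then show "(\<integral>z. (norm (G x z - g x))\<^sup>2 \<partial>M) \<le> \<rho>\<^sup>2"
    by simp
qed

text \<open>With m steps remaining, the anchor \<open>\<gamma> m g x0\<close> predicts the remaining displacement of the
  iterates, and \<open>weight m\<close> prices the gradient norm that the remaining steps can still convert into
  displacement.\<close>
definition weight :: "nat \<Rightarrow> real" where
  "weight m = \<gamma>\<^sup>2 * real m * (real m + 1) / 2"

definition potential :: "'a \<Rightarrow> nat \<Rightarrow> 'a \<Rightarrow> real" where
  "potential x0 m x = (norm (x0 - x + (\<gamma> * real m) *\<^sub>R g x0))\<^sup>2 + weight m * (norm (g x))\<^sup>2"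

lemma weight_nonneg: "0 \<le> weight m"
  by (simp add: weight_def)

lemma weight_Suc: "weight (Suc m) = weight m + \<gamma>\<^sup>2 * real (Suc m)"
  by (simp add: weight_def field_simps)

lemma potential_nonneg: "0 \<le> potential x0 m x"
  by (simp add: potential_def weight_nonneg)

lemma potential_borel_measurable [measurable]: "potential x0 m \<in> borel_measurable borel"
  unfolding potential_def by measurable

lemma potential_after_perturbed_step:
  "potential x0 m (x - \<gamma> *\<^sub>R (g x + e))
    \<le> (norm (x0 - x + (\<gamma> * real m) *\<^sub>R g x0 + \<gamma> *\<^sub>R g x + \<gamma> *\<^sub>R e))\<^sup>2
      + weight m * ((norm (g x))\<^sup>2 + \<gamma> * L * (norm e)\<^sup>2)"
proof -
  have shift: "x0 - (x - \<gamma> *\<^sub>R (g x + e)) + (\<gamma> * real m) *\<^sub>R g x0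
      = x0 - x + (\<gamma> * real m) *\<^sub>R g x0 + \<gamma> *\<^sub>R g x + \<gamma> *\<^sub>R e"
    by (simp add: algebra_simps)
  have "weight m * (norm (g (x - \<gamma> *\<^sub>R (g x + e))))\<^sup>2
      \<le> weight m * ((norm (g x))\<^sup>2 + \<gamma> * L * (norm e)\<^sup>2)"
    using norm_gradient_after_step[OF step_pos step_le] weight_nonneg by (rule mult_left_mono)
  then show ?thesis
    unfolding potential_def shift by (rule add_left_mono)
qed

lemma potential_step:
  "(\<integral>\<^sup>+ z. potential x0 m (x - \<gamma> *\<^sub>R G x z) \<partial>M) + ennreal (\<gamma>\<^sup>2 * real (Suc m) * (norm (g x0))\<^sup>2)
    \<le> ennreal (potential x0 (Suc m) x + \<gamma>\<^sup>2 * \<rho>\<^sup>2 + weight m * \<gamma> * L * \<rho>\<^sup>2)"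
proof -
  define e where "e = (\<lambda>z. G x z - g x)"
  define A where "A = x0 - x + (\<gamma> * real m) *\<^sub>R g x0 + \<gamma> *\<^sub>R g x"
  define V where "V = (\<integral>z. (norm (e z))\<^sup>2 \<partial>M)"
  define H where "H z = (norm (A + \<gamma> *\<^sub>R e z))\<^sup>2 + weight m * ((norm (g x))\<^sup>2 + \<gamma> * L * (norm (e z))\<^sup>2)"
    for z
  have e: "integrable M e" "(\<integral>z. e z \<partial>M) = 0" "integrable M (\<lambda>z. (norm (e z))\<^sup>2)" "V \<le> \<rho>\<^sup>2"
    using unbiased[of x] noise_second_moment[of x] by (auto simp: e_def V_def prob_space)
  have H_nonneg: "0 \<le> H z" for z
    unfolding H_def using weight_nonneg step_pos L_nonneg by (intro add_nonneg_nonneg) auto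
  have square_integrable: "integrable M (\<lambda>z. (norm (A + \<gamma> *\<^sub>R e z))\<^sup>2)"
    unfolding power2_norm_add using e by (auto simp: power_mult_distrib)
  then have H_integrable: "integrable M H"
    unfolding H_def using e by simp
  have "(\<integral>z. (norm (A + \<gamma> *\<^sub>R e z))\<^sup>2 \<partial>M) = (norm A)\<^sup>2 + \<gamma>\<^sup>2 * V"
    using expectation_power2_norm_add_centered[of "\<lambda>z. \<gamma> *\<^sub>R e z" A] e
    by (simp add: V_def power_mult_distrib)
  then have H_integral: "(\<integral>z. H z \<partial>M) = (norm A)\<^sup>2 + \<gamma>\<^sup>2 * V + weight m * ((norm (g x))\<^sup>2 + \<gamma> * L * V)"
    unfolding H_def using square_integrable e by (simp add: V_def prob_space)
  have "potential x0 m (x - \<gamma> *\<^sub>R G x z) \<le> H z" for z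
    using potential_after_perturbed_step[of x0 m x "e z"] by (simp add: H_def A_def e_def)
  then have "(\<integral>\<^sup>+ z. potential x0 m (x - \<gamma> *\<^sub>R G x z) \<partial>M) \<le> (\<integral>\<^sup>+ z. H z \<partial>M)"
    by (intro nn_integral_mono ennreal_leI)
  also have "\<dots> = ennreal (\<integral>z. H z \<partial>M)"
    using H_integrable H_nonneg by (simp add: nn_integral_eq_integral)
  finally have "(\<integral>\<^sup>+ z. potential x0 m (x - \<gamma> *\<^sub>R G x z) \<partial>M) + ennreal (\<gamma>\<^sup>2 * real (Suc m) * (norm (g x0))\<^sup>2)
      \<le> ennreal ((\<integral>z. H z \<partial>M) + \<gamma>\<^sup>2 * real (Suc m) * (norm (g x0))\<^sup>2)"
    using H_nonneg by (simp add: add_right_mono integral_nonneg_AE)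
  also have "\<dots> \<le> ennreal (potential x0 (Suc m) x + \<gamma>\<^sup>2 * \<rho>\<^sup>2 + weight m * \<gamma> * L * \<rho>\<^sup>2)"
  proof (rule ennreal_leI)
    have "(norm A)\<^sup>2 + \<gamma>\<^sup>2 * real (Suc m) * (norm (g x0))\<^sup>2
        \<le> (norm (x0 - x + (\<gamma> * real (Suc m)) *\<^sub>R g x0))\<^sup>2 + \<gamma>\<^sup>2 * real (Suc m) * (norm (g x))\<^sup>2"
      using anchored_gradient_shift[of \<gamma> "real (Suc m)" x0 x] step_pos by (simp add: A_def)
    moreover have "\<gamma>\<^sup>2 * V \<le> \<gamma>\<^sup>2 * \<rho>\<^sup>2" "weight m * \<gamma> * L * V \<le> weight m * \<gamma> * L * \<rho>\<^sup>2"
      using e(4) weight_nonneg step_pos L_nonneg by (simp_all add: mult_left_mono)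
    ultimately show "(\<integral>z. H z \<partial>M) + \<gamma>\<^sup>2 * real (Suc m) * (norm (g x0))\<^sup>2
      \<le> potential x0 (Suc m) x + \<gamma>\<^sup>2 * \<rho>\<^sup>2 + weight m * \<gamma> * L * \<rho>\<^sup>2"
      by (simp add: H_integral potential_def weight_Suc algebra_simps)
  qed
  finally show ?thesis .
qed

lemma expected_potential_step:
  "(\<integral>\<^sup>+ w. potential x0 m (sgd_iter G \<gamma> x0 w (Suc s)) \<partial>PiM {..<Suc s} (\<lambda>_. M))
      + ennreal (\<gamma>\<^sup>2 * real (Suc m) * (norm (g x0))\<^sup>2)
    \<le> (\<integral>\<^sup>+ w. potential x0 (Suc m) (sgd_iter G \<gamma> x0 w s) \<partial>PiM {..<s} (\<lambda>_. M))
      + ennreal (\<gamma>\<^sup>2 * \<rho>\<^sup>2 + weight m * \<gamma> * L * \<rho>\<^sup>2)"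
proof -
  let ?P = "PiM {..<s} (\<lambda>_. M)"
  let ?X = "\<lambda>w. sgd_iter G \<gamma> x0 w s"
  interpret P: prob_space ?P
    by (intro prob_space_PiM prob_space_axioms)
  have [measurable]: "?X \<in> borel_measurable ?P"
    using measurable_sgd_iter[OF G_measurable] by simp
  have [measurable]: "(\<lambda>x. \<integral>\<^sup>+ z. potential x0 m (x - \<gamma> *\<^sub>R G x z) \<partial>M) \<in> borel_measurable borel"
    using G_measurable by measurable
  have "(\<integral>\<^sup>+ w. potential x0 m (sgd_iter G \<gamma> x0 w (Suc s)) \<partial>PiM {..<Suc s} (\<lambda>_. M))
    = (\<integral>\<^sup>+ w. (\<integral>\<^sup>+ z. potential x0 m (?X w - \<gamma> *\<^sub>R G (?X w) z) \<partial>M) \<partial>?P)"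
    by (rule nn_integral_sgd_iter_Suc[OF sigma_finite_measure G_measurable]) measurable
  then have "(\<integral>\<^sup>+ w. potential x0 m (sgd_iter G \<gamma> x0 w (Suc s)) \<partial>PiM {..<Suc s} (\<lambda>_. M))
      + ennreal (\<gamma>\<^sup>2 * real (Suc m) * (norm (g x0))\<^sup>2)
    = (\<integral>\<^sup>+ w. (\<integral>\<^sup>+ z. potential x0 m (?X w - \<gamma> *\<^sub>R G (?X w) z) \<partial>M)
      + ennreal (\<gamma>\<^sup>2 * real (Suc m) * (norm (g x0))\<^sup>2) \<partial>?P)"
    by (simp add: nn_integral_add P.emeasure_space_1)
  also have "\<dots> \<le> (\<integral>\<^sup>+ w. ennreal (potential x0 (Suc m) (?X w))
      + ennreal (\<gamma>\<^sup>2 * \<rho>\<^sup>2 + weight m * \<gamma> * L * \<rho>\<^sup>2) \<partial>?P)"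
    using potential_step potential_nonneg weight_nonneg step_pos L_nonneg
    by (intro nn_integral_mono) (simp add: ennreal_plus[symmetric] add.assoc del: ennreal_plus)
  also have "\<dots> = (\<integral>\<^sup>+ w. potential x0 (Suc m) (?X w) \<partial>?P)
      + ennreal (\<gamma>\<^sup>2 * \<rho>\<^sup>2 + weight m * \<gamma> * L * \<rho>\<^sup>2)"
    by (simp add: nn_integral_add P.emeasure_space_1)
  finally show ?thesis .
qed

lemma sum_weight: "(\<Sum>i<n. weight i) = \<gamma>\<^sup>2 * (real n - 1) * real n * (real n + 1) / 6"
  by (induction n) (simp_all add: weight_def field_simps)

lemma sum_weight_increments: "(\<Sum>i<n. \<gamma>\<^sup>2 * real (Suc i)) = weight n"
  by (induction n) (simp_all add: weight_Suc weight_def[of 0])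

theorem expected_distance_bound:
  "(\<integral>\<^sup>+ w. ennreal ((norm (x0 - sgd_iter G \<gamma> x0 w n))\<^sup>2) \<partial>PiM {..<n} (\<lambda>_. M))
    \<le> ennreal (\<gamma>\<^sup>2 * (real n)\<^sup>2 * (norm (g x0))\<^sup>2
        + \<gamma>\<^sup>2 * real n * (1 + (real n - 1) * (real n + 1) / 6 * \<gamma> * L) * \<rho>\<^sup>2)"
proof -
  define a where "a s = (\<integral>\<^sup>+ w. potential x0 (n - s) (sgd_iter G \<gamma> x0 w s) \<partial>PiM {..<s} (\<lambda>_. M))"
    for s
  define d where "d m = \<gamma>\<^sup>2 * real (Suc m) * (norm (g x0))\<^sup>2" for m
  define K where "K m = \<gamma>\<^sup>2 * \<rho>\<^sup>2 + weight m * \<gamma> * L * \<rho>\<^sup>2" for m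
  have d_nonneg: "0 \<le> d m" and K_nonneg: "0 \<le> K m" for m
    using weight_nonneg step_pos L_nonneg by (auto simp: d_def K_def)
  have step: "a (Suc s) + ennreal (d (n - Suc s)) \<le> a s + ennreal (K (n - Suc s))" if "s < n" for s
    using expected_potential_step[of s x0 "n - Suc s"] that
    by (simp add: a_def d_def K_def Suc_diff_Suc)
  have "a n + (\<Sum>s<n. ennreal (d (n - Suc s))) \<le> a 0 + (\<Sum>s<n. ennreal (K (n - Suc s)))"
    using step by (rule telescoping_sum_le)
  moreover have "a n = (\<integral>\<^sup>+ w. ennreal ((norm (x0 - sgd_iter G \<gamma> x0 w n))\<^sup>2) \<partial>PiM {..<n} (\<lambda>_. M))"
    by (simp add: a_def potential_def weight_def)
  moreover have "a 0 = ennreal (\<gamma>\<^sup>2 * (real n)\<^sup>2 * (norm (g x0))\<^sup>2) + ennreal (\<Sum>i<n. d i)"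
  proof -
    have "(\<Sum>i<n. d i) = weight n * (norm (g x0))\<^sup>2"
      using sum_weight_increments[of n] by (simp add: d_def sum_distrib_right[symmetric])
    then show ?thesis
      by (simp add: a_def potential_def prob_space.emeasure_space_1[OF prob_space_PiM]
          prob_space_axioms power_mult_distrib weight_nonneg)
  qed
  ultimately have "(\<integral>\<^sup>+ w. ennreal ((norm (x0 - sgd_iter G \<gamma> x0 w n))\<^sup>2) \<partial>PiM {..<n} (\<lambda>_. M))
      \<le> ennreal (\<gamma>\<^sup>2 * (real n)\<^sup>2 * (norm (g x0))\<^sup>2 + (\<Sum>i<n. K i))"
    using d_nonneg K_nonneg
    by (simp add: sum.nat_diff_reindex[where g = "\<lambda>i. ennreal (d i)"]
        sum.nat_diff_reindex[where g = "\<lambda>i. ennreal (K i)"] sum_nonneg ennreal_add_left_cancel_le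
        ac_simps)
  also have "(\<Sum>i<n. K i) = real n * (\<gamma>\<^sup>2 * \<rho>\<^sup>2) + (\<Sum>i<n. weight i) * (\<gamma> * L * \<rho>\<^sup>2)"
    by (simp add: K_def sum.distrib sum_distrib_right mult.assoc)
  finally show ?thesis
    by (simp add: sum_weight algebra_simps)
qed

end

theorem lemma9:
  fixes f :: "'a::euclidean_space \<Rightarrow> real"
    and g :: "'a \<Rightarrow> 'a"
    and G :: "'a \<Rightarrow> 'b \<Rightarrow> 'a"
    and M :: "'b measure"
    and L \<rho> \<gamma> :: real and t :: nat and x0 :: 'a
  assumes convex: "convex_on UNIV f"
    and grad: "\<And>x. (f has_derivative (\<lambda>h. g x \<bullet> h)) (at x)"
    and smooth: "lipschitz_on L UNIV g"
    and prob: "prob_space M"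
    and meas: "(\<lambda>(x, z). G x z) \<in> borel_measurable (borel \<Otimes>\<^sub>M M)"
    and unbiased: "\<And>x. integrable M (G x) \<and> (\<integral>z. G x z \<partial>M) = g x"
    and variance: "\<And>x. (\<integral>\<^sup>+ z. ennreal ((norm (G x z - g x))\<^sup>2) \<partial>M) \<le> ennreal (\<rho>\<^sup>2)"
    and t: "t \<ge> 1"
    and gpos: "\<gamma> > 0"
    and step1: "\<gamma> * L \<le> 1"
    and step2: "\<gamma> * L * (real t - 1) \<le> 1"
  shows "(\<integral>\<^sup>+ w. ennreal ((norm (x0 - sgd_iter G \<gamma> x0 w t))\<^sup>2) \<partial>(PiM {..<t} (\<lambda>_. M)))
          \<le> ennreal (\<gamma>\<^sup>2 * (real t)\<^sup>2 * (norm (g x0))\<^sup>2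
                    + \<gamma>\<^sup>2 * real t * (1 + 2 * (real t - 1) * (real t + 1) * \<gamma> * L) * \<rho>\<^sup>2)"
proof -
  have L_nonneg: "0 \<le> L"
    using smooth by (simp add: lipschitz_on_def)
  interpret sgd_cocoercive g L M G \<rho> \<gamma>
    using convex_lipschitz_gradient_cocoercive[OF convex grad smooth] L_nonneg prob meas unbiased
      variance gpos step1
    by (intro sgd_cocoercive.intro cocoercive_gradient.intro sgd_cocoercive_axioms.intro) auto
  note expected_distance_bound[of t x0]
  also have "ennreal (\<gamma>\<^sup>2 * (real t)\<^sup>2 * (norm (g x0))\<^sup>2
        + \<gamma>\<^sup>2 * real t * (1 + (real t - 1) * (real t + 1) / 6 * \<gamma> * L) * \<rho>\<^sup>2)
      \<le> ennreal (\<gamma>\<^sup>2 * (real t)\<^sup>2 * (norm (g x0))\<^sup>2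
        + \<gamma>\<^sup>2 * real t * (1 + 2 * (real t - 1) * (real t + 1) * \<gamma> * L) * \<rho>\<^sup>2)"
  proof -
    have "(real t - 1) * (real t + 1) / 6 * (\<gamma> * L) \<le> 2 * (real t - 1) * (real t + 1) * (\<gamma> * L)"
      using t gpos L_nonneg by (intro mult_right_mono) auto
    then have "\<gamma>\<^sup>2 * real t * (1 + (real t - 1) * (real t + 1) / 6 * \<gamma> * L) * \<rho>\<^sup>2
        \<le> \<gamma>\<^sup>2 * real t * (1 + 2 * (real t - 1) * (real t + 1) * \<gamma> * L) * \<rho>\<^sup>2"
      by (intro mult_right_mono mult_left_mono) (auto simp: mult.assoc)
    then show ?thesis
      by (intro ennreal_leI) simp
  qed
  finally show ?thesis .
qed

end
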